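(* Let $\mathfrak g\xrightarrow{\mu}\mathfrak h$ be a crossed module of Lie algebras with action $\mathcal L$. Let $\omega\in\bigwedge^2\mathfrak h^*$ and $\varphi\in(\mathfrak g\oplus\mathfrak h)^*$ satisfy: (1) $-\omega([y_0,y_1],y_2)+\omega([y_0,y_2],y_1)-\omega([y_1,y_2],y_0)=0$ for all $y_0,y_1,y_2\in\mathfrak h$; (2) $\varphi(x_2,y)-\varphi(x_1+x_2,y)+\varphi(x_1,y+\mu(x_2))=0$ for all $x_1,x_2\in\mathfrak g$, $y\in\mathfrak h$; (3) $\omega(y_0,y_1)-\omega(y_0+\mu(x_0),y_1+\mu(x_1))=\varphi([(x_0,y_0),(x_1,y_1)]_{\mathcal L})$ for all $(x_0,y_0),(x_1,y_1)\in\mathfrak g\oplus\mathfrak h$. Let $\mathfrak h\oplus^\omega\mathbb R$ be $\mathfrak h\oplus\mathbb R$ with bracket $[(y_0,\lambda_0),(y_1,\lambda_1)]_\omega=([y_0,y_1],-\omega(y_0,y_1))$. Then $$\mu_\varphi:\mathfrak g\to\mathfrak h\oplus^\omega\mathbb R,\qquad x\mapsto(\mu(x),\varphi(x,0)),$$ together with the action $\mathcal L_{(y,\lambda)}x:=\mathcal L_yx$, is a crossed module of Lie algebras.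
   Context: A crossed module of Lie algebras consists of Lie algebras $\mathfrak g,\mathfrak h$, a Lie algebra homomorphism $\mu:\mathfrak g\to\mathfrak h$ and a Lie algebra homomorphism $\mathcal L:\mathfrak h\to\mathrm{Der}(\mathfrak g)$, $y\mapsto\mathcal L_y$, such that $\mu(\mathcal L_yx)=[y,\mu(x)]$ and $\mathcal L_{\mu(x_0)}x_1=[x_0,x_1]$. The bracket $[\cdot,\cdot]_{\mathcal L}$ on $\mathfrak g\oplus\mathfrak h$ is $[(x_0,y_0),(x_1,y_1)]_{\mathcal L}=([x_0,x_1]+\mathcal L_{y_0}x_1-\mathcal L_{y_1}x_0,[y_0,y_1])$. Conditions (1)–(3) express that $(\omega,\varphi)$ is a 2-cocycle in the total complex of the double complex of the Lie 2-algebra (with trivial real coefficients). *)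

theory Defs
  imports "HOL-Analysis.Analysis"
begin

definition lie_algebra :: "('a::real_vector \<Rightarrow> 'a \<Rightarrow> 'a) \<Rightarrow> bool" where
  "lie_algebra br \<longleftrightarrow>
     bilinear br \<and>
     (\<forall>x. br x x = 0) \<and>
     (\<forall>x y z. br x (br y z) + br y (br z x) + br z (br x y) = 0)"

definition lie_hom ::
  "('a::real_vector \<Rightarrow> 'a \<Rightarrow> 'a) \<Rightarrow> ('b::real_vector \<Rightarrow> 'b \<Rightarrow> 'b) \<Rightarrow> ('a \<Rightarrow> 'b) \<Rightarrow> bool" where
  "lie_hom bra brb f \<longleftrightarrow> linear f \<and> (\<forall>x y. f (bra x y) = brb (f x) (f y))"

definition derivation :: "('a::real_vector \<Rightarrow> 'a \<Rightarrow> 'a) \<Rightarrow> ('a \<Rightarrow> 'a) \<Rightarrow> bool" where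
  "derivation br D \<longleftrightarrow> linear D \<and> (\<forall>x y. D (br x y) = br (D x) y + br x (D y))"

text \<open>Crossed module of Lie algebras \<open>\<mu> : g \<rightarrow> h\<close> with action
\<open>L : h \<rightarrow> Der(g)\<close>; \<open>L\<close> is a Lie algebra homomorphism into \<open>Der(g)\<close> whose
bracket is the commutator.\<close>
definition crossed_module ::
  "('g::real_vector \<Rightarrow> 'g \<Rightarrow> 'g) \<Rightarrow> ('h::real_vector \<Rightarrow> 'h \<Rightarrow> 'h) \<Rightarrow>
   ('g \<Rightarrow> 'h) \<Rightarrow> ('h \<Rightarrow> 'g \<Rightarrow> 'g) \<Rightarrow> bool" where
  "crossed_module brg brh \<mu> L \<longleftrightarrow>
     lie_algebra brg \<and> lie_algebra brh \<and>
     lie_hom brg brh \<mu> \<and>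
     (\<forall>x. linear (\<lambda>y. L y x)) \<and>
     (\<forall>y. derivation brg (L y)) \<and>
     (\<forall>y0 y1. L (brh y0 y1) = (\<lambda>x. L y0 (L y1 x) - L y1 (L y0 x))) \<and>
     (\<forall>y x. \<mu> (L y x) = brh y (\<mu> x)) \<and>
     (\<forall>x0 x1. L (\<mu> x0) x1 = brg x0 x1)"

definition semidirect_bracket ::
  "('g::real_vector \<Rightarrow> 'g \<Rightarrow> 'g) \<Rightarrow> ('h::real_vector \<Rightarrow> 'h \<Rightarrow> 'h) \<Rightarrow> ('h \<Rightarrow> 'g \<Rightarrow> 'g) \<Rightarrow>
   'g \<times> 'h \<Rightarrow> 'g \<times> 'h \<Rightarrow> 'g \<times> 'h" where
  "semidirect_bracket brg brh L p q =
     (brg (fst p) (fst q) + L (snd p) (fst q) - L (snd q) (fst p), brh (snd p) (snd q))"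

definition omega_bracket ::
  "('h::real_vector \<Rightarrow> 'h \<Rightarrow> 'h) \<Rightarrow> ('h \<Rightarrow> 'h \<Rightarrow> real) \<Rightarrow> 'h \<times> real \<Rightarrow> 'h \<times> real \<Rightarrow> 'h \<times> real" where
  "omega_bracket brh \<omega> p q = (brh (fst p) (fst q), - \<omega> (fst p) (fst q))"

end

theory Submission
  imports Defs
begin

text \<open>Condition (1) says that \<open>\<omega>\<close> is a Lie algebra 2-cocycle on \<open>h\<close>,
so \<open>h \<oplus>\<^sup>\<omega> \<real>\<close> is a central extension of \<open>h\<close> and the projection to \<open>h\<close> is a Lie algebra
homomorphism. Since \<open>\<mu>\<^sub>\<phi>\<close> lifts \<open>\<mu>\<close> through this projection and the action only sees the
\<open>h\<close>-component, all crossed module axioms except two are inherited from \<open>\<mu>\<close>. The remaining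
two, that \<open>\<mu>\<^sub>\<phi>\<close> is a homomorphism and is equivariant, are exactly the \<open>\<real>\<close>-components of
condition (3) evaluated at \<open>y\<^sub>0 = y\<^sub>1 = 0\<close> and at \<open>x\<^sub>0 = y\<^sub>1 = 0\<close>.\<close>

lemma bilinear_alternating_antisym:
  fixes f :: "'a::real_vector \<Rightarrow> 'a \<Rightarrow> 'b::real_vector"
  assumes "bilinear f" and "\<And>x. f x x = 0"
  shows "f y x = - f x y"
proof -
  have "f (x + y) (x + y) = f x x + f x y + f y x + f y y"
    using assms(1) by (simp add: bilinear_ladd bilinear_radd)
  then show ?thesis
    using assms(2) by (simp add: eq_neg_iff_add_eq_0 add.commute)
qed

lemma bilinear_omega_bracket:
  assumes "bilinear brh" and "bilinear \<omega>"
  shows "bilinear (omega_bracket brh \<omega>)"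
  using assms by (auto simp: bilinear_def linear_iff omega_bracket_def)

lemma lie_algebra_omega_bracket:
  fixes brh :: "'h::real_vector \<Rightarrow> 'h \<Rightarrow> 'h"
  assumes lie: "lie_algebra brh"
    and \<omega>_bil: "bilinear \<omega>" and \<omega>_alt: "\<forall>y. \<omega> y y = 0"
    and cocycle: "\<forall>y0 y1 y2. - \<omega> (brh y0 y1) y2 + \<omega> (brh y0 y2) y1 - \<omega> (brh y1 y2) y0 = 0"
  shows "lie_algebra (omega_bracket brh \<omega>)"
proof -
  have brh_bil: "bilinear brh" and brh_alt: "\<And>y. brh y y = 0"
    and jacobi: "\<And>a b c. brh a (brh b c) + brh b (brh c a) + brh c (brh a b) = 0"
    using lie by (auto simp: lie_algebra_def)
  have \<omega>_antisym: "\<omega> y x = - \<omega> x y" for x y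
    using bilinear_alternating_antisym[OF \<omega>_bil] \<omega>_alt by blast
  have \<omega>_jacobi: "\<omega> a (brh b c) + \<omega> b (brh c a) + \<omega> c (brh a b) = 0" for a b c
  proof -
    have "\<omega> b (brh c a) = - \<omega> b (brh a c)"
      using bilinear_alternating_antisym[OF brh_bil brh_alt, of c a] bilinear_rneg[OF \<omega>_bil] by metis
    then show ?thesis
      using cocycle[rule_format, of a b c] \<omega>_antisym[of c "brh a b"] \<omega>_antisym[of b "brh a c"]
        \<omega>_antisym[of a "brh b c"]
      by linarith
  qed
  show ?thesis
    unfolding lie_algebra_def
  proof (intro conjI allI bilinear_omega_bracket brh_bil \<omega>_bil)
    show "omega_bracket brh \<omega> x x = 0" for x
      using brh_alt \<omega>_alt by (simp add: omega_bracket_def zero_prod_def)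
    show "omega_bracket brh \<omega> x (omega_bracket brh \<omega> y z) + omega_bracket brh \<omega> y (omega_bracket brh \<omega> z x)
        + omega_bracket brh \<omega> z (omega_bracket brh \<omega> x y) = 0" for x y z
      using jacobi[of "fst x" "fst y" "fst z"] \<omega>_jacobi[of "fst x" "fst y" "fst z"]
      by (simp add: omega_bracket_def prod_eq_iff)
  qed
qed

lemma lie_hom_fst_omega_bracket: "lie_hom (omega_bracket brh \<omega>) brh fst"
  by (simp add: lie_hom_def linear_fst omega_bracket_def)

lemma crossed_module_lift:
  assumes cm: "crossed_module brg brh \<mu> L"
    and lie: "lie_algebra brk" and \<pi>_hom: "lie_hom brk brh \<pi>" and \<nu>_hom: "lie_hom brg brk \<nu>"
    and lift: "\<And>x. \<pi> (\<nu> x) = \<mu> x"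
    and equivariant: "\<And>p x. \<nu> (L (\<pi> p) x) = brk p (\<nu> x)"
  shows "crossed_module brg brk \<nu> (\<lambda>p x. L (\<pi> p) x)"
proof -
  have \<pi>_lin: "linear \<pi>" and \<pi>_bracket: "\<And>p q. \<pi> (brk p q) = brh (\<pi> p) (\<pi> q)"
    using \<pi>_hom by (auto simp: lie_hom_def)
  have "linear (\<lambda>y. L y x) \<Longrightarrow> linear (\<lambda>p. L (\<pi> p) x)" for x
    using linear_compose[OF \<pi>_lin] by (simp add: o_def)
  with cm \<pi>_bracket show ?thesis
    using lie \<nu>_hom lift equivariant by (simp add: crossed_module_def)
qed

lemma crossed_module_zero:
  assumes "crossed_module brg brh \<mu> L"
  shows "\<mu> 0 = 0" and "L 0 x = 0" and "L y 0 = 0" and "brg 0 x = 0" and "brh y 0 = 0"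
proof -
  have "linear \<mu>" "linear (\<lambda>y. L y x)" "linear (L y)" "bilinear brg" "bilinear brh"
    using assms by (auto simp: crossed_module_def lie_hom_def derivation_def lie_algebra_def)
  then show "\<mu> 0 = 0" "L 0 x = 0" "L y 0 = 0" "brg 0 x = 0" "brh y 0 = 0"
    using linear_0 bilinear_lzero bilinear_rzero by fastforce+
qed

lemma omega_bracket_extension_lie_hom:
  assumes cm: "crossed_module brg brh \<mu> L"
    and \<omega>_bil: "bilinear \<omega>" and \<phi>_lin: "linear \<phi>"
    and c3: "\<forall>x0 y0 x1 y1. \<omega> y0 y1 - \<omega> (y0 + \<mu> x0) (y1 + \<mu> x1)
               = \<phi> (semidirect_bracket brg brh L (x0, y0) (x1, y1))"
  shows "lie_hom brg (omega_bracket brh \<omega>) (\<lambda>x. (\<mu> x, \<phi> (x, 0)))"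
proof -
  have \<mu>_lin: "linear \<mu>" and \<mu>_bracket: "\<And>x y. \<mu> (brg x y) = brh (\<mu> x) (\<mu> y)"
    using cm by (auto simp: crossed_module_def lie_hom_def)
  have "linear (\<lambda>x. (\<mu> x, \<phi> (x, 0)))"
  proof (rule linearI)
    show "(\<mu> (x + y), \<phi> (x + y, 0)) = (\<mu> x, \<phi> (x, 0)) + (\<mu> y, \<phi> (y, 0))" for x y
      using linear_add[OF \<mu>_lin] linear_add[OF \<phi>_lin, of "(x, 0)" "(y, 0)"] by simp
    show "(\<mu> (c *\<^sub>R x), \<phi> (c *\<^sub>R x, 0)) = c *\<^sub>R (\<mu> x, \<phi> (x, 0))" for c x
      using linear_scale[OF \<mu>_lin] linear_scale[OF \<phi>_lin, of c "(x, 0)"] by simp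
  qed
  moreover have "\<phi> (brg x y, 0) = - \<omega> (\<mu> x) (\<mu> y)" for x y
  proof -
    have "\<omega> 0 0 - \<omega> (0 + \<mu> x) (0 + \<mu> y) = \<phi> (semidirect_bracket brg brh L (x, 0) (y, 0))"
      using c3 by blast
    then show ?thesis
      using crossed_module_zero[OF cm] bilinear_lzero[OF \<omega>_bil] by (simp add: semidirect_bracket_def)
  qed
  ultimately show ?thesis
    by (simp add: lie_hom_def omega_bracket_def \<mu>_bracket)
qed

lemma omega_bracket_extension_equivariant:
  assumes cm: "crossed_module brg brh \<mu> L"
    and \<omega>_bil: "bilinear \<omega>"
    and c3: "\<forall>x0 y0 x1 y1. \<omega> y0 y1 - \<omega> (y0 + \<mu> x0) (y1 + \<mu> x1)
               = \<phi> (semidirect_bracket brg brh L (x0, y0) (x1, y1))"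
  shows "(\<mu> (L (fst p) x), \<phi> (L (fst p) x, 0)) = omega_bracket brh \<omega> p (\<mu> x, \<phi> (x, 0))"
proof -
  have "\<mu> (L y x) = brh y (\<mu> x)" for y
    using cm by (simp add: crossed_module_def)
  moreover have "\<phi> (L y x, 0) = - \<omega> y (\<mu> x)" for y
  proof -
    have "\<omega> y 0 - \<omega> (y + \<mu> 0) (0 + \<mu> x) = \<phi> (semidirect_bracket brg brh L (0, y) (x, 0))"
      using c3 by blast
    then show ?thesis
      using crossed_module_zero[OF cm] bilinear_rzero[OF \<omega>_bil] by (simp add: semidirect_bracket_def)
  qed
  ultimately show ?thesis
    by (simp add: omega_bracket_def)
qed

theorem mainTheorem15:
  fixes brg :: "'g::real_vector \<Rightarrow> 'g \<Rightarrow> 'g"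
    and brh :: "'h::real_vector \<Rightarrow> 'h \<Rightarrow> 'h"
    and \<mu> :: "'g \<Rightarrow> 'h"
    and L :: "'h \<Rightarrow> 'g \<Rightarrow> 'g"
    and \<omega> :: "'h \<Rightarrow> 'h \<Rightarrow> real"
    and \<phi> :: "'g \<times> 'h \<Rightarrow> real"
  assumes cm: "crossed_module brg brh \<mu> L"
    and \<omega>_bil: "bilinear \<omega>"
    and \<omega>_alt: "\<forall>y. \<omega> y y = 0"
    and \<phi>_lin: "linear \<phi>"
    and c1: "\<forall>y0 y1 y2. - \<omega> (brh y0 y1) y2 + \<omega> (brh y0 y2) y1 - \<omega> (brh y1 y2) y0 = 0"
    and c2: "\<forall>x1 x2 y. \<phi> (x2, y) - \<phi> (x1 + x2, y) + \<phi> (x1, y + \<mu> x2) = 0"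
    and c3: "\<forall>x0 y0 x1 y1. \<omega> y0 y1 - \<omega> (y0 + \<mu> x0) (y1 + \<mu> x1)
               = \<phi> (semidirect_bracket brg brh L (x0, y0) (x1, y1))"
  shows "crossed_module brg (omega_bracket brh \<omega>) (\<lambda>x. (\<mu> x, \<phi> (x, 0))) (\<lambda>p x. L (fst p) x)"
proof (rule crossed_module_lift[OF cm _ lie_hom_fst_omega_bracket])
  show "lie_algebra (omega_bracket brh \<omega>)"
    using cm \<omega>_bil \<omega>_alt c1 by (simp add: crossed_module_def lie_algebra_omega_bracket)
  show "lie_hom brg (omega_bracket brh \<omega>) (\<lambda>x. (\<mu> x, \<phi> (x, 0)))"
    using cm \<omega>_bil \<phi>_lin c3 by (rule omega_bracket_extension_lie_hom)
  show "(\<mu> (L (fst p) x), \<phi> (L (fst p) x, 0)) = omega_bracket brh \<omega> p (\<mu> x, \<phi> (x, 0))" for p x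
    using cm \<omega>_bil c3 by (rule omega_bracket_extension_equivariant)
qed simp

end
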